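(* Let $\mathcal R$ be a connected non-compact Riemann surface with universal cover $\widetilde{\mathcal R}$ and deck group $\pi_1(\mathcal R)$. Let $\eta$ be a holomorphic one-form on $\widetilde{\mathcal R}$ with values in the Lie algebra of $\Lambda\mathrm{SL}_2\mathbb C_\sigma$ (holomorphic also in $\lambda\in\mathbb C^*$) invariant under $\pi_1(\mathcal R)$, and let $C$ solve $dC=C\eta$ with $C(z_0,\lambda)\in\Lambda\mathrm{SL}_2\mathbb C_\sigma$, so that $C(\tau.z,\lambda)=\rho(\tau,\lambda)C(z,\lambda)$ for a homomorphism $\rho(\cdot,\lambda):\pi_1(\mathcal R)\to\Lambda\mathrm{SL}_2\mathbb C_\sigma$. Assume $\rho(\tau,\cdot)\in\Lambda\mathrm{SU}_{1,1\sigma}$ for all $\tau$. Then: (1) every $\tau\in\pi_1(\mathcal R)$ maps $\mathcal I_e$ onto itself and $\mathcal I_\omega$ onto itself; (2) for $z\in\mathcal I_e$, with the normalized Iwasawa decomposition $C=FV_+$, one has $F(\tau.z,\overline{\tau.z},\lambda)=\rho(\tau,\lambda)F(z,\bar z,\lambda)$; (3) for $z\in\mathcal I_\omega$, with the normalized decomposition $C=\tilde F\omega_0\tilde V_+$, one has $\tilde F(\tau.z,\overline{\tau.z},\lambda)\,\omega_0=\rho(\tau,\lambda)\,\tilde F(z,\bar z,\lambda)\,\omega_0$.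
   Context: $\sigma_3=\mathrm{diag}(1,-1)$. $\Lambda\mathrm{SL}_2\mathbb C_\sigma$: loops $g:\mathbb S^1\to\mathrm{SL}_2\mathbb C$ with $g(-\lambda)=\sigma_3g(\lambda)\sigma_3$; $\Lambda^+\mathrm{SL}_2\mathbb C_\sigma$: those extending holomorphically to $|\lambda|<1$; $\Lambda\mathrm{SU}_{1,1\sigma}$: those with $\sigma_3({}^t\overline{g(1/\bar\lambda)})^{-1}\sigma_3=g(\lambda)$. Let $\omega_0=\begin{pmatrix}0&\lambda\\-\lambda^{-1}&0\end{pmatrix}$. The Iwasawa cells are $\mathcal I_e=\{z: C(z,\cdot)\in\Lambda\mathrm{SU}_{1,1\sigma}\cdot\Lambda^+\mathrm{SL}_2\mathbb C_\sigma\}$ and $\mathcal I_\omega=\{z:C(z,\cdot)\in\Lambda\mathrm{SU}_{1,1\sigma}\cdot\omega_0\cdot\Lambda^+\mathrm{SL}_2\mathbb C_\sigma\}$. On $\mathcal I_e$ the decomposition $C=FV_+$ ($F\in\Lambda\mathrm{SU}_{1,1\sigma}$, $V_+\in\Lambda^+\mathrm{SL}_2\mathbb C_\sigma$) is made unique by requiring the diagonal of $V_+(\lambda=0)$ to be positive; likewise $C=\tilde F\omega_0\tilde V_+$ on $\mathcal I_\omega$ with $\tilde V_+(\lambda=0)$ having positive diagonal. *)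

theory Defs
  imports "HOL-Analysis.Analysis"
begin

type_synonym mat2 = "complex^2^2"

definition mk2 :: "complex \<Rightarrow> complex \<Rightarrow> complex \<Rightarrow> complex \<Rightarrow> mat2" where
  "mk2 a b c d = vector [vector [a, b], vector [c, d]]"

definition sigma3 :: mat2 where "sigma3 = mk2 1 0 0 (-1)"

definition omega0 :: "complex \<Rightarrow> mat2" where "omega0 lam = mk2 0 lam (- inverse lam) 0"

definition mconj :: "mat2 \<Rightarrow> mat2" where "mconj A = (\<chi> i j. cnj (A $ i $ j))"

definition unit_circle :: "complex set" where "unit_circle = sphere 0 1"

text \<open>Loops are maps on the unit circle (values off the circle are irrelevant).
  Twisted loop group Lambda SL_2(C)_sigma (continuous loops).\<close>
definition LSL :: "(complex \<Rightarrow> mat2) \<Rightarrow> bool" where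
  "LSL g \<longleftrightarrow> continuous_on unit_circle g \<and>
     (\<forall>lam\<in>unit_circle. det (g lam) = 1 \<and> g (- lam) = sigma3 ** g lam ** sigma3)"

definition plus_ext :: "(complex \<Rightarrow> mat2) \<Rightarrow> (complex \<Rightarrow> mat2) \<Rightarrow> bool" where
  "plus_ext g h \<longleftrightarrow> continuous_on (cball 0 1) h \<and>
     (\<forall>i j. (\<lambda>mu. h mu $ i $ j) holomorphic_on ball 0 1) \<and>
     (\<forall>lam\<in>unit_circle. h lam = g lam)"

definition LSL_plus :: "(complex \<Rightarrow> mat2) \<Rightarrow> bool" where
  "LSL_plus g \<longleftrightarrow> LSL g \<and> (\<exists>h. plus_ext g h)"

definition LSL_plus_normalized :: "(complex \<Rightarrow> mat2) \<Rightarrow> bool" where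
  "LSL_plus_normalized g \<longleftrightarrow> LSL g \<and>
     (\<exists>h. plus_ext g h \<and> h 0 $ 1 $ 1 \<in> \<real> \<and> Re (h 0 $ 1 $ 1) > 0
                     \<and> h 0 $ 2 $ 2 \<in> \<real> \<and> Re (h 0 $ 2 $ 2) > 0)"

definition LSU11 :: "(complex \<Rightarrow> mat2) \<Rightarrow> bool" where
  "LSU11 g \<longleftrightarrow> LSL g \<and>
     (\<forall>lam\<in>unit_circle.
        sigma3 ** matrix_inv (transpose (mconj (g (1 / cnj lam)))) ** sigma3 = g lam)"

definition loop_mult :: "(complex \<Rightarrow> mat2) \<Rightarrow> (complex \<Rightarrow> mat2) \<Rightarrow> complex \<Rightarrow> mat2" where
  "loop_mult f g = (\<lambda>lam. f lam ** g lam)"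

definition Iwasawa_e :: "complex set \<Rightarrow> (complex \<Rightarrow> complex \<Rightarrow> mat2) \<Rightarrow> complex set" where
  "Iwasawa_e D C = {z\<in>D. \<exists>F V. LSU11 F \<and> LSL_plus V \<and>
      (\<forall>lam\<in>unit_circle. C z lam = F lam ** V lam)}"

definition Iwasawa_omega :: "complex set \<Rightarrow> (complex \<Rightarrow> complex \<Rightarrow> mat2) \<Rightarrow> complex set" where
  "Iwasawa_omega D C = {z\<in>D. \<exists>F V. LSU11 F \<and> LSL_plus V \<and>
      (\<forall>lam\<in>unit_circle. C z lam = F lam ** omega0 lam ** V lam)}"

definition norm_decomp_e :: "(complex \<Rightarrow> mat2) \<Rightarrow> (complex \<Rightarrow> mat2) \<Rightarrow> (complex \<Rightarrow> mat2) \<Rightarrow> bool" where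
  "norm_decomp_e Cz F V \<longleftrightarrow> LSU11 F \<and> LSL_plus_normalized V \<and>
      (\<forall>lam\<in>unit_circle. Cz lam = F lam ** V lam)"

definition norm_decomp_omega :: "(complex \<Rightarrow> mat2) \<Rightarrow> (complex \<Rightarrow> mat2) \<Rightarrow> (complex \<Rightarrow> mat2) \<Rightarrow> bool" where
  "norm_decomp_omega Cz F V \<longleftrightarrow> LSU11 F \<and> LSL_plus_normalized V \<and>
      (\<forall>lam\<in>unit_circle. Cz lam = F lam ** omega0 lam ** V lam)"

text \<open>Universal cover model: D a nonempty simply connected plane domain (by uniformisation
  the universal cover of a non-compact Riemann surface is the plane or the disk), G the deck
  group: a group of biholomorphic automorphisms of D (extended by the identity off D) acting
  freely and properly discontinuously, with D/G non-compact.\<close>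
definition deck_group :: "complex set \<Rightarrow> (complex \<Rightarrow> complex) set \<Rightarrow> bool" where
  "deck_group D G \<longleftrightarrow>
     id \<in> G \<and> (\<forall>s\<in>G. \<forall>t\<in>G. s \<circ> t \<in> G) \<and> (\<forall>t\<in>G. \<exists>s\<in>G. s \<circ> t = id) \<and>
     (\<forall>t\<in>G. t holomorphic_on D \<and> t ` D = D \<and> (\<forall>z. z \<notin> D \<longrightarrow> t z = z)) \<and>
     (\<forall>z\<in>D. \<exists>U. open U \<and> z \<in> U \<and> U \<subseteq> D \<and> (\<forall>t\<in>G. t \<noteq> id \<longrightarrow> t ` U \<inter> U = {}))"

definition quotient_noncompact :: "complex set \<Rightarrow> (complex \<Rightarrow> complex) set \<Rightarrow> bool" where
  "quotient_noncompact D G \<longleftrightarrow>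
     \<not> (\<exists>K. compact K \<and> K \<subseteq> D \<and> D = (\<Union>t\<in>G. t ` K))"

end

theory Submission
  imports Defs "HOL-Complex_Analysis.Conformal_Mappings"
begin

text \<open>Multiplying a decomposition \<open>C(z) = F M V\<^sub>+\<close> (with \<open>M = I\<close> or \<open>M = \<omega>\<^sub>0\<close>) on the left by
  \<open>\<rho>(\<tau>)\<close> gives a decomposition of \<open>C(\<tau>.z) = \<rho>(\<tau>) C(z)\<close>, because \<open>\<Lambda>SU\<^sub>1\<^sub>,\<^sub>1\<^sub>\<sigma>\<close> is closed under
  products; as the deck transformations form a group, each cell is mapped onto itself.
  The transformation rules for the unitary factors then follow from uniqueness of the
  normalised decomposition. If \<open>F' M W = N M V\<close> with \<open>F', N\<close> unitary and \<open>V, W\<close> normalised,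
  then \<open>Q = V W\<^sup>-\<^sup>1\<close> extends holomorphically to the unit disc, while on the circle
  \<open>Q = M\<^sup>-\<^sup>1 N\<^sup>-\<^sup>1 F' M\<close> has the \<open>SU(1,1)\<close> shape \<open>Q\<^sub>2\<^sub>2 = cnj Q\<^sub>1\<^sub>1\<close>, \<open>Q\<^sub>2\<^sub>1 = cnj Q\<^sub>1\<^sub>2\<close>. Then \<open>Q\<^sub>1\<^sub>1 + Q\<^sub>2\<^sub>2\<close>
  and \<open>i (Q\<^sub>1\<^sub>1 - Q\<^sub>2\<^sub>2)\<close>, and likewise for the off-diagonal entries, are holomorphic with real
  boundary values, hence constant. The twisting makes \<open>Q(0)\<close> diagonal and the normalisation
  makes its diagonal positive, which together with \<open>det Q = 1\<close> forces \<open>Q = I\<close>.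
  Only the monodromy relation \<open>C(\<tau>.z) = \<rho>(\<tau>) C(z)\<close> enters the proof; the hypotheses on \<open>\<eta>\<close>
  and the differential equation only explain where \<open>\<rho>\<close> comes from.\<close>

lemma mk2_nth [simp]:
  "mk2 a b c d $ 1 $ 1 = a" "mk2 a b c d $ 1 $ 2 = b"
  "mk2 a b c d $ 2 $ 1 = c" "mk2 a b c d $ 2 $ 2 = d"
  by (simp_all add: mk2_def)

lemma mat2_eq_iff:
  "(A::mat2) = B \<longleftrightarrow> A$1$1 = B$1$1 \<and> A$1$2 = B$1$2 \<and> A$2$1 = B$2$1 \<and> A$2$2 = B$2$2"
  by (auto simp: vec_eq_iff forall_2)

lemma matrix_mult_mat2_nth: "((A::mat2) ** B)$i$j = A$i$1 * B$1$j + A$i$2 * B$2$j"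
  by (simp add: matrix_matrix_mult_def sum_2)

lemma mat_1_mat2_nth [simp]:
  "(mat 1 :: mat2)$1$1 = 1" "(mat 1 :: mat2)$1$2 = 0"
  "(mat 1 :: mat2)$2$1 = 0" "(mat 1 :: mat2)$2$2 = 1"
  by (simp_all add: mat_def)

lemma sigma3_nth [simp]:
  "sigma3 $ 1 $ 1 = 1" "sigma3 $ 1 $ 2 = 0" "sigma3 $ 2 $ 1 = 0" "sigma3 $ 2 $ 2 = -1"
  by (simp_all add: sigma3_def)

lemma transpose_mconj_nth [simp]: "transpose (mconj g) $ i $ j = cnj (g $ j $ i)"
  by (simp add: transpose_def mconj_def)

lemma matrix_mult_mat2_eq_chi: "(A::mat2) ** B = (\<chi> i j. A$i$1 * B$1$j + A$i$2 * B$2$j)"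
  by (simp add: vec_eq_iff matrix_mult_mat2_nth)

lemma sigma3_sigma3: "sigma3 ** (sigma3 ** X) = X"
proof -
  have "sigma3 ** sigma3 = mat 1"
    by (simp add: mat2_eq_iff matrix_mult_mat2_nth)
  then show ?thesis by (simp add: matrix_mul_assoc)
qed

definition adjugate2 :: "mat2 \<Rightarrow> mat2" where
  "adjugate2 A = mk2 (A$2$2) (-A$1$2) (-A$2$1) (A$1$1)"

lemma adjugate2_nth [simp]:
  "adjugate2 A $ 1 $ 1 = A$2$2" "adjugate2 A $ 1 $ 2 = - A$1$2"
  "adjugate2 A $ 2 $ 1 = - A$2$1" "adjugate2 A $ 2 $ 2 = A$1$1"
  by (simp_all add: adjugate2_def)

lemma matrix_mult_adjugate2: "det A = 1 \<Longrightarrow> A ** adjugate2 A = mat 1"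
  by (simp add: mat2_eq_iff matrix_mult_mat2_nth det_2 algebra_simps)

lemma adjugate2_matrix_mult: "det A = 1 \<Longrightarrow> adjugate2 A ** A = mat 1"
  by (simp add: mat2_eq_iff matrix_mult_mat2_nth det_2 algebra_simps)

lemma det_adjugate2: "det (adjugate2 A) = det A"
  by (simp add: det_2 algebra_simps)

lemma adjugate2_mat_1: "adjugate2 (mat 1) = mat 1"
  by (simp add: mat2_eq_iff)

lemma matrix_inv_eq_adjugate2:
  assumes "det (B::mat2) = 1"
  shows "matrix_inv B = adjugate2 B"
proof -
  have "B ** matrix_inv B = mat 1 \<and> matrix_inv B ** B = mat 1"
    unfolding matrix_inv_def
    by (rule someI[of _ "adjugate2 B"]) (simp add: matrix_mult_adjugate2 adjugate2_matrix_mult assms)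
  then have "adjugate2 B ** (B ** matrix_inv B) = adjugate2 B" by simp
  then show ?thesis by (simp add: matrix_mul_assoc adjugate2_matrix_mult assms)
qed

definition su11_shape :: "mat2 \<Rightarrow> bool" where
  "su11_shape A \<longleftrightarrow> A$2$2 = cnj (A$1$1) \<and> A$2$1 = cnj (A$1$2)"

lemma su11_shape_mult: "su11_shape A \<Longrightarrow> su11_shape B \<Longrightarrow> su11_shape (A ** B)"
  by (simp add: su11_shape_def matrix_mult_mat2_nth)

lemma su11_shape_adjugate2: "su11_shape A \<Longrightarrow> su11_shape (adjugate2 A)"
  by (simp add: su11_shape_def)

lemma su11_shape_iff_sigma3_twisted_unitary:
  assumes "det (g::mat2) = 1"
  shows "sigma3 ** matrix_inv (transpose (mconj g)) ** sigma3 = g \<longleftrightarrow> su11_shape g"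
proof -
  have "det (transpose (mconj g)) = cnj (det g)"
    by (simp add: det_2)
  then have d: "det (transpose (mconj g)) = 1" using assms by simp
  have e: "sigma3 ** adjugate2 (transpose (mconj g)) ** sigma3 =
      mk2 (cnj (g$2$2)) (cnj (g$2$1)) (cnj (g$1$2)) (cnj (g$1$1))"
    by (simp add: mat2_eq_iff matrix_mult_mat2_nth)
  show ?thesis
    unfolding matrix_inv_eq_adjugate2[OF d] e mat2_eq_iff su11_shape_def mk2_nth
    by (metis complex_cnj_cnj)
qed

lemma unit_circle_nonzero: "lam \<in> unit_circle \<Longrightarrow> lam \<noteq> 0"
  by (auto simp: unit_circle_def)

lemma unit_circle_reflect: "lam \<in> unit_circle \<Longrightarrow> 1 / cnj lam = lam"
  by (simp add: unit_circle_def divide_conv_cnj)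

lemma LSU11_iff: "LSU11 g \<longleftrightarrow> LSL g \<and> (\<forall>lam\<in>unit_circle. su11_shape (g lam))"
  unfolding LSU11_def
  by (metis (no_types, lifting) LSL_def unit_circle_reflect su11_shape_iff_sigma3_twisted_unitary)

lemma LSL_mult:
  assumes f: "LSL f" and g: "LSL g"
  shows "LSL (\<lambda>l. f l ** g l)"
  unfolding LSL_def
proof (intro conjI ballI)
  have "continuous_on unit_circle f" "continuous_on unit_circle g"
    using f g by (auto simp: LSL_def)
  then show "continuous_on unit_circle (\<lambda>l. f l ** g l)"
    unfolding matrix_mult_mat2_eq_chi
    by (intro continuous_intros continuous_on_component)
next
  fix lam assume l: "lam \<in> unit_circle"
  show "det (f lam ** g lam) = 1" using f g l by (simp add: det_mul LSL_def)
  have "f (- lam) ** g (- lam) = sigma3 ** f lam ** sigma3 ** (sigma3 ** g lam ** sigma3)"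
    using f g l by (simp add: LSL_def)
  also have "\<dots> = sigma3 ** (f lam ** g lam) ** sigma3"
    by (simp add: matrix_mul_assoc[symmetric] sigma3_sigma3)
  finally show "f (- lam) ** g (- lam) = sigma3 ** (f lam ** g lam) ** sigma3" .
qed

lemma LSU11_mult: "LSU11 f \<Longrightarrow> LSU11 g \<Longrightarrow> LSU11 (\<lambda>l. f l ** g l)"
  by (simp add: LSU11_iff LSL_mult su11_shape_mult)

subsection \<open>Holomorphic functions on the closed disc with real boundary values\<close>

lemma holomorphic_real_on_sphere_const:
  fixes f :: "complex \<Rightarrow> complex"
  assumes cf: "continuous_on (cball 0 1) f" and hf: "f holomorphic_on ball 0 1"
    and re: "\<And>z. z \<in> sphere 0 1 \<Longrightarrow> f z \<in> \<real>" and z: "z \<in> cball 0 1"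
  shows "f z = f 0"
proof -
  have im: "Im (f w) = 0" if w: "w \<in> ball 0 1" for w
  proof -
    have "Re (c * f w) \<le> 0" if "c = \<i> \<or> c = -\<i>" for c
      by (rule maximum_real_frontier[where f="\<lambda>z. c * f z" and S="ball 0 1"])
         (use cf hf re w that in \<open>auto intro!: holomorphic_intros continuous_intros
                                   simp: complex_is_Real_iff\<close>)
    from this[of \<i>] this[of "-\<i>"] show ?thesis by simp
  qed
  have "f constant_on ball 0 1"
  proof (rule ccontr)
    assume "\<not> f constant_on ball 0 1"
    then have "open (f ` ball 0 1)"
      by (intro open_mapping_thm[OF hf]) auto
    then obtain e where e: "e > 0" "ball (f 0) e \<subseteq> f ` ball 0 1"
      by (meson openE centre_in_ball imageI zero_less_one)
    have "f 0 + \<i> * of_real (e/2) \<in> ball (f 0) e"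
      using e by (simp add: dist_norm norm_mult)
    then obtain w where w: "w \<in> ball 0 1" "f w = f 0 + \<i> * of_real (e/2)"
      using e(2) by (metis imageE subsetD)
    have "Im (f w) = e/2" unfolding w(2) using im[of 0] by simp
    with im[OF w(1)] e show False by simp
  qed
  then have "\<And>w. w \<in> ball 0 1 \<Longrightarrow> f w = f 0"
    unfolding constant_on_def by (metis centre_in_ball zero_less_one)
  moreover have "closure (ball (0::complex) 1) = cball 0 1" by simp
  ultimately show ?thesis
    using continuous_constant_on_closure[of "ball 0 1" f "f 0" z] cf z by metis
qed

lemma holomorphic_cnj_pair_on_sphere_const:
  fixes a d :: "complex \<Rightarrow> complex"
  assumes ca: "continuous_on (cball 0 1) a" and ha: "a holomorphic_on ball 0 1"
    and cd: "continuous_on (cball 0 1) d" and hd: "d holomorphic_on ball 0 1"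
    and rel: "\<And>z. z \<in> sphere 0 1 \<Longrightarrow> d z = cnj (a z)" and z: "z \<in> sphere 0 1"
  shows "a z = a 0 \<and> d z = d 0"
proof -
  have sum: "a z + d z = a 0 + d 0"
    by (rule holomorphic_real_on_sphere_const[where f="\<lambda>w. a w + d w"])
       (use ca ha cd hd rel z in \<open>auto intro!: continuous_intros holomorphic_intros
                                   simp: complex_is_Real_iff\<close>)
  have "\<i> * (a z - d z) = \<i> * (a 0 - d 0)"
    by (rule holomorphic_real_on_sphere_const[where f="\<lambda>w. \<i> * (a w - d w)"])
       (use ca ha cd hd rel z in \<open>auto intro!: continuous_intros holomorphic_intros
                                   simp: complex_is_Real_iff\<close>)
  then have "a z - d z = a 0 - d 0" by simp
  with sum show ?thesis by algebra
qed

definition disc_holomorphic :: "(complex \<Rightarrow> mat2) \<Rightarrow> bool" where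
  "disc_holomorphic h \<longleftrightarrow> (\<forall>i j. continuous_on (cball 0 1) (\<lambda>w. h w $ i $ j) \<and>
                                (\<lambda>w. h w $ i $ j) holomorphic_on ball 0 1)"

lemma plus_ext_disc_holomorphic: "plus_ext g h \<Longrightarrow> disc_holomorphic h"
  unfolding plus_ext_def disc_holomorphic_def by (auto intro!: continuous_on_component)

lemma disc_holomorphic_mult:
  "disc_holomorphic h \<Longrightarrow> disc_holomorphic k \<Longrightarrow> disc_holomorphic (\<lambda>w. h w ** k w)"
  unfolding disc_holomorphic_def matrix_mult_mat2_nth
  by (simp add: continuous_on_add continuous_on_mult holomorphic_on_add holomorphic_on_mult)

lemma disc_holomorphic_adjugate2:
  "disc_holomorphic h \<Longrightarrow> disc_holomorphic (\<lambda>w. adjugate2 (h w))"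
  unfolding disc_holomorphic_def forall_2
  by (auto intro!: continuous_intros holomorphic_intros)

lemma disc_holomorphic_su11_shape_const:
  assumes Y: "disc_holomorphic Y"
    and su: "\<And>w. w \<in> sphere 0 1 \<Longrightarrow> su11_shape (Y w)" and z: "z \<in> sphere 0 1"
  shows "Y z = Y 0"
proof -
  note comp = Y[unfolded disc_holomorphic_def, rule_format]
  have "Y z $ 1 $ i = Y 0 $ 1 $ i \<and> Y z $ 2 $ (3 - i) = Y 0 $ 2 $ (3 - i)" if "i = 1 \<or> i = 2" for i
    by (rule holomorphic_cnj_pair_on_sphere_const[OF conjunct1[OF comp] conjunct2[OF comp]
          conjunct1[OF comp] conjunct2[OF comp] _ z])
       (use su that in \<open>auto simp: su11_shape_def\<close>)
  from this[of 1] this[of 2] show ?thesis by (simp add: mat2_eq_iff)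
qed

lemma continuous_holomorphic_on_disc_reflect:
  fixes f :: "complex \<Rightarrow> complex"
  assumes "continuous_on (cball 0 1) f" "f holomorphic_on ball 0 1"
  shows "continuous_on (cball 0 1) (\<lambda>w. f (- w))" "(\<lambda>w. f (- w)) holomorphic_on ball 0 1"
proof -
  show "continuous_on (cball 0 1) (\<lambda>w. f (- w))"
    by (rule continuous_on_compose2[OF assms(1)]) (auto intro!: continuous_intros)
  have "(f \<circ> uminus) holomorphic_on ball 0 1"
    by (rule holomorphic_on_compose_gen[OF _ assms(2)]) (auto intro!: holomorphic_intros)
  then show "(\<lambda>w. f (- w)) holomorphic_on ball 0 1" by (simp add: o_def)
qed

subsection \<open>Uniqueness of the normalised Iwasawa factor\<close>

lemma plus_ext_twisted_offdiag_0:
  assumes g: "LSL g" and h: "plus_ext g h"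
  shows "h 0 $ 1 $ 2 = 0 \<and> h 0 $ 2 $ 1 = 0"
proof -
  txt \<open>Off-diagonal entries of a twisted loop are odd in \<open>\<lambda>\<close>, so \<open>h(w) + h(-w)\<close> vanishes on
    the circle and hence, by the maximum principle, at \<open>0\<close>.\<close>
  have odd: "h 0 $ a $ b = 0"
    if ab: "\<And>l. (sigma3 ** g l ** sigma3) $ a $ b = - g l $ a $ b" for a b
  proof -
    define f where "f w = h w $ a $ b + h (- w) $ a $ b" for w
    have c: "continuous_on (cball 0 1) (\<lambda>w. h w $ a $ b)"
      and hol: "(\<lambda>w. h w $ a $ b) holomorphic_on ball 0 1"
      using plus_ext_disc_holomorphic[OF h] by (auto simp: disc_holomorphic_def)
    have cf: "continuous_on (cball 0 1) f" and hf: "f holomorphic_on ball 0 1"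
      unfolding f_def using c hol continuous_holomorphic_on_disc_reflect[OF c hol]
      by (auto intro!: continuous_intros holomorphic_intros)
    have f0: "f w = 0" if w: "w \<in> sphere 0 1" for w
    proof -
      have w': "w \<in> unit_circle" "- w \<in> unit_circle" using w by (auto simp: unit_circle_def)
      then have "h w = g w" "h (- w) = sigma3 ** g w ** sigma3"
        using g h by (auto simp: plus_ext_def LSL_def)
      then show ?thesis unfolding f_def using ab by simp
    qed
    have "f 1 = f 0"
      by (rule holomorphic_real_on_sphere_const[OF cf hf]) (use f0 in auto)
    then show ?thesis using f0[of 1] by (simp add: f_def)
  qed
  show ?thesis
    by (intro conjI odd) (simp_all add: matrix_mult_mat2_nth)
qed

lemma su11_shape_diagonal_pos_eq_1:
  assumes su: "su11_shape Y" and det: "det Y = 1" and off: "Y$1$2 = 0"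
    and pos: "Y$1$1 \<in> \<real>" "Re (Y$1$1) > 0"
  shows "Y = mat 1"
proof -
  obtain r where r: "Y$1$1 = of_real r" "r > 0" using pos by (auto elim!: Reals_cases)
  have diag: "Y$2$2 = of_real r" "Y$2$1 = 0"
    using su off r by (simp_all add: su11_shape_def)
  then have "of_real (r * r) = (1::complex)" using det off r by (simp add: det_2)
  then have "r = 1" using r(2) by (metis of_real_eq_1_iff power2_eq_1_iff power2_eq_square
                                      less_numeral_extra(3) neg_0_less_iff_less not_one_less_zero)
  then show ?thesis using r diag off by (simp add: mat2_eq_iff)
qed

lemma LSL_plus_normalized_su11_quotient_eq_1:
  assumes V: "LSL_plus_normalized V" and W: "LSL_plus_normalized W"
    and su: "\<And>l. l \<in> unit_circle \<Longrightarrow> su11_shape (V l ** adjugate2 (W l))"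
    and lam: "lam \<in> unit_circle"
  shows "V lam ** adjugate2 (W lam) = mat 1"
proof -
  obtain h where h: "plus_ext V h" "h 0 $ 1 $ 1 \<in> \<real>" "Re (h 0 $ 1 $ 1) > 0" and LV: "LSL V"
    using V unfolding LSL_plus_normalized_def by blast
  obtain k where k: "plus_ext W k" "k 0 $ 2 $ 2 \<in> \<real>" "Re (k 0 $ 2 $ 2) > 0" and LW: "LSL W"
    using W unfolding LSL_plus_normalized_def by blast
  define Y where "Y w = h w ** adjugate2 (k w)" for w
  have Y_circle: "Y w = V w ** adjugate2 (W w)" if "w \<in> sphere 0 1" for w
    using that h(1) k(1) by (simp add: Y_def plus_ext_def unit_circle_def)
  have lam': "lam \<in> sphere 0 1" using lam by (simp add: unit_circle_def)
  have "Y lam = Y 0"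
  proof (rule disc_holomorphic_su11_shape_const[OF _ _ lam'])
    show "disc_holomorphic Y"
      unfolding Y_def[abs_def]
      using plus_ext_disc_holomorphic[OF h(1)] plus_ext_disc_holomorphic[OF k(1)]
      by (intro disc_holomorphic_mult disc_holomorphic_adjugate2)
    show "su11_shape (Y w)" if "w \<in> sphere 0 1" for w
      using su Y_circle[OF that] that by (simp add: unit_circle_def)
  qed
  moreover have "su11_shape (Y lam)" "det (Y lam) = 1"
    using su[OF lam] LV LW lam by (simp_all add: Y_circle[OF lam'] det_mul det_adjugate2 LSL_def)
  moreover have "Y 0 $ 1 $ 2 = 0" "Y 0 $ 1 $ 1 = h 0 $ 1 $ 1 * k 0 $ 2 $ 2"
    using plus_ext_twisted_offdiag_0[OF LV h(1)] plus_ext_twisted_offdiag_0[OF LW k(1)]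
    by (simp_all add: Y_def matrix_mult_mat2_nth)
  moreover have "h 0 $ 1 $ 1 * k 0 $ 2 $ 2 \<in> \<real> \<and> Re (h 0 $ 1 $ 1 * k 0 $ 2 $ 2) > 0"
    using h(2,3) k(2,3) by (auto elim!: Reals_cases)
  ultimately have "Y lam = mat 1"
    using su11_shape_diagonal_pos_eq_1[of "Y lam"] by simp
  then show ?thesis using Y_circle[OF lam'] by simp
qed

lemma Iwasawa_factor_equivariant:
  assumes R: "LSU11 R" and F: "LSU11 F" and F': "LSU11 F'"
    and V: "LSL_plus_normalized V" and V': "LSL_plus_normalized V'"
    and M_det: "\<And>l. l \<in> unit_circle \<Longrightarrow> det (M l) = 1"
    and M_su: "\<And>l X. l \<in> unit_circle \<Longrightarrow> su11_shape (M l ** X ** adjugate2 (M l)) \<Longrightarrow> su11_shape X"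
    and decomp: "\<And>l. l \<in> unit_circle \<Longrightarrow> Cz l = F l ** M l ** V l"
    and decomp': "\<And>l. l \<in> unit_circle \<Longrightarrow> R l ** Cz l = F' l ** M l ** V' l"
    and lam: "lam \<in> unit_circle"
  shows "F' lam = R lam ** F lam"
proof -
  have eq: "F' l ** M l ** V' l = R l ** (F l ** M l ** V l)" if "l \<in> unit_circle" for l
    using decomp decomp' that by simp
  define N where "N l = R l ** F l" for l
  have N: "LSU11 N" unfolding N_def[abs_def] using R F by (rule LSU11_mult)
  have dN: "det (N l) = 1" and dV': "det (V' l) = 1" if l: "l \<in> unit_circle" for l
    using N V' l by (auto simp: LSU11_def LSL_plus_normalized_def LSL_def)
  define Q where "Q l = M l ** (V l ** adjugate2 (V' l)) ** adjugate2 (M l)" for l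
  have F'_eq: "F' l = N l ** Q l" if l: "l \<in> unit_circle" for l
  proof -
    have "F' l = F' l ** (M l ** ((V' l ** adjugate2 (V' l)) ** adjugate2 (M l)))"
      by (simp add: matrix_mult_adjugate2 dV'[OF l] M_det[OF l])
    also have "\<dots> = (F' l ** M l ** V' l) ** adjugate2 (V' l) ** adjugate2 (M l)"
      by (simp add: matrix_mul_assoc)
    also have "\<dots> = N l ** Q l"
      by (simp add: eq[OF l] N_def Q_def matrix_mul_assoc)
    finally show ?thesis .
  qed
  have "V l ** adjugate2 (V' l) = mat 1" if l: "l \<in> unit_circle" for l
  proof (rule LSL_plus_normalized_su11_quotient_eq_1[OF V V' _ l])
    fix l' assume l': "l' \<in> unit_circle"
    have "adjugate2 (N l') ** F' l' = Q l'"
      using adjugate2_matrix_mult[OF dN[OF l']]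
      by (metis F'_eq[OF l'] matrix_mul_assoc matrix_mul_lid)
    moreover have "su11_shape (adjugate2 (N l') ** F' l')"
      using N F' l' by (intro su11_shape_mult su11_shape_adjugate2) (auto simp: LSU11_iff)
    ultimately show "su11_shape (V l' ** adjugate2 (V' l'))"
      using M_su[OF l'] by (simp add: Q_def)
  qed
  then have "Q lam = mat 1"
    using matrix_mult_adjugate2[OF M_det[OF lam]] lam by (simp add: Q_def)
  then show ?thesis
    using F'_eq[OF lam] by (simp add: N_def)
qed

lemma det_omega0: "l \<noteq> 0 \<Longrightarrow> det (omega0 l) = 1"
  by (simp add: det_2 omega0_def)

lemma omega0_conj_su11_shape:
  assumes l: "l \<in> unit_circle" and su: "su11_shape (omega0 l ** X ** adjugate2 (omega0 l))"
  shows "su11_shape X"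
proof -
  have l0: "l \<noteq> 0" using l by (rule unit_circle_nonzero)
  have ci: "cnj l = inverse l"
    using unit_circle_reflect[OF l] by (metis inverse_eq_divide inverse_inverse_eq)
  have "omega0 l ** X ** adjugate2 (omega0 l) =
      mk2 (X$2$2) (- (l * l) * X$2$1) (- (inverse l * inverse l) * X$1$2) (X$1$1)"
    using l0 by (simp add: mat2_eq_iff matrix_mult_mat2_nth omega0_def field_simps)
  with su have "X$1$1 = cnj (X$2$2)" "- (inverse l * inverse l) * X$1$2 = cnj (- (l * l) * X$2$1)"
    unfolding su11_shape_def by simp_all
  then show ?thesis
    using l0 unfolding su11_shape_def by (simp add: ci)
qed

subsection \<open>Iwasawa cells under the deck group\<close>

definition Iwasawa_cell :: "complex set \<Rightarrow> (complex \<Rightarrow> complex \<Rightarrow> mat2) \<Rightarrow> (complex \<Rightarrow> mat2) \<Rightarrow> complex set" where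
  "Iwasawa_cell D C M = {z\<in>D. \<exists>F V. LSU11 F \<and> LSL_plus V \<and>
      (\<forall>lam\<in>unit_circle. C z lam = F lam ** M lam ** V lam)}"

lemma Iwasawa_e_eq_cell: "Iwasawa_e D C = Iwasawa_cell D C (\<lambda>_. mat 1)"
  by (simp add: Iwasawa_e_def Iwasawa_cell_def)

lemma Iwasawa_omega_eq_cell: "Iwasawa_omega D C = Iwasawa_cell D C omega0"
  by (simp add: Iwasawa_omega_def Iwasawa_cell_def)

lemma Iwasawa_cell_image_subset:
  assumes tD: "t ` D \<subseteq> D" and R: "LSU11 R"
    and C: "\<And>z lam. z \<in> D \<Longrightarrow> lam \<in> unit_circle \<Longrightarrow> C (t z) lam = R lam ** C z lam"
  shows "t ` Iwasawa_cell D C M \<subseteq> Iwasawa_cell D C M"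
proof clarify
  fix z assume "z \<in> Iwasawa_cell D C M"
  then obtain F V where z: "z \<in> D" and FV: "LSU11 F" "LSL_plus V"
    "\<forall>lam\<in>unit_circle. C z lam = F lam ** M lam ** V lam"
    unfolding Iwasawa_cell_def by blast
  then have "\<forall>lam\<in>unit_circle. C (t z) lam = (R lam ** F lam) ** M lam ** V lam"
    using C by (simp add: matrix_mul_assoc)
  moreover have "LSU11 (\<lambda>l. R l ** F l)" using R FV(1) by (rule LSU11_mult)
  ultimately show "t z \<in> Iwasawa_cell D C M"
    unfolding Iwasawa_cell_def using tD z FV(2) by blast
qed

lemma deck_group_image_eq:
  assumes G: "deck_group D G" and t: "t \<in> G" and SD: "S \<subseteq> D"
    and inv: "\<And>s. s \<in> G \<Longrightarrow> s ` S \<subseteq> S"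
  shows "t ` S = S"
proof
  show "t ` S \<subseteq> S" using inv[OF t] .
  show "S \<subseteq> t ` S"
  proof
    fix w assume w: "w \<in> S"
    obtain s where s: "s \<in> G" "s \<circ> t = id" using G t unfolding deck_group_def by blast
    have "w \<in> t ` D" using G t w SD unfolding deck_group_def by blast
    then have "t (s w) = w" using s(2) by (metis comp_apply id_apply imageE)
    moreover have "s w \<in> S" using inv[OF s(1)] w by blast
    ultimately show "w \<in> t ` S" by (metis imageI)
  qed
qed

lemma Iwasawa_cell_deck_invariant:
  assumes G: "deck_group D G" and R: "\<And>t. t \<in> G \<Longrightarrow> LSU11 (R t)"
    and C: "\<And>t z lam. t \<in> G \<Longrightarrow> z \<in> D \<Longrightarrow> lam \<in> unit_circle \<Longrightarrow> C (t z) lam = R t lam ** C z lam"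
    and t: "t \<in> G"
  shows "t ` Iwasawa_cell D C M = Iwasawa_cell D C M"
proof (rule deck_group_image_eq[OF G t])
  show "Iwasawa_cell D C M \<subseteq> D" by (auto simp: Iwasawa_cell_def)
  fix s assume s: "s \<in> G"
  have "s ` D \<subseteq> D" using G s unfolding deck_group_def by blast
  then show "s ` Iwasawa_cell D C M \<subseteq> Iwasawa_cell D C M"
    using R[OF s] C[OF s] by (rule Iwasawa_cell_image_subset)
qed

theorem mainTheorem6:
  fixes D :: "complex set" and G :: "(complex \<Rightarrow> complex) set"
    and A :: "complex \<Rightarrow> complex \<Rightarrow> mat2"
    and C :: "complex \<Rightarrow> complex \<Rightarrow> mat2"
    and rho :: "(complex \<Rightarrow> complex) \<Rightarrow> complex \<Rightarrow> mat2"
    and z0 :: complex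
  assumes D: "open D" "connected D" "simply_connected D" "D \<noteq> {}"
    and G: "deck_group D G" "quotient_noncompact D G"
    \<comment> \<open>eta = A(z,lambda) dz, holomorphic in z and in lambda, sl_2-valued and twisted\<close>
    and A_hol_z: "\<And>lam i j. lam \<noteq> 0 \<Longrightarrow> (\<lambda>z. A z lam $ i $ j) holomorphic_on D"
    and A_hol_lam: "\<And>z i j. z \<in> D \<Longrightarrow> (\<lambda>lam. A z lam $ i $ j) holomorphic_on (- {0})"
    and A_lie: "\<And>z lam. z \<in> D \<Longrightarrow> lam \<noteq> 0 \<Longrightarrow>
        A z lam $ 1 $ 1 + A z lam $ 2 $ 2 = 0 \<and> A z (- lam) = sigma3 ** A z lam ** sigma3"
    \<comment> \<open>invariance of eta under the deck group: tau^* eta = eta\<close>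
    and A_inv: "\<And>t z lam i j. t \<in> G \<Longrightarrow> z \<in> D \<Longrightarrow> lam \<noteq> 0 \<Longrightarrow>
        deriv t z * A (t z) lam $ i $ j = A z lam $ i $ j"
    \<comment> \<open>dC = C eta\<close>
    and C_ode: "\<And>z lam i j. z \<in> D \<Longrightarrow> lam \<noteq> 0 \<Longrightarrow>
        ((\<lambda>w. C w lam $ i $ j) has_field_derivative ((C z lam ** A z lam) $ i $ j)) (at z)"
    and z0: "z0 \<in> D" "LSL (C z0)"
    \<comment> \<open>monodromy\<close>
    and rho: "\<And>t z lam. t \<in> G \<Longrightarrow> z \<in> D \<Longrightarrow> lam \<noteq> 0 \<Longrightarrow> C (t z) lam = rho t lam ** C z lam"
    and rho_SU: "\<And>t. t \<in> G \<Longrightarrow> LSU11 (rho t)"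
  shows "(\<forall>t\<in>G. t ` Iwasawa_e D C = Iwasawa_e D C \<and> t ` Iwasawa_omega D C = Iwasawa_omega D C)
    \<and> (\<forall>t\<in>G. \<forall>z\<in>Iwasawa_e D C. \<forall>F V F' V'.
          norm_decomp_e (C z) F V \<longrightarrow> norm_decomp_e (C (t z)) F' V' \<longrightarrow>
          (\<forall>lam\<in>unit_circle. F' lam = rho t lam ** F lam))
    \<and> (\<forall>t\<in>G. \<forall>z\<in>Iwasawa_omega D C. \<forall>F V F' V'.
          norm_decomp_omega (C z) F V \<longrightarrow> norm_decomp_omega (C (t z)) F' V' \<longrightarrow>
          (\<forall>lam\<in>unit_circle. F' lam ** omega0 lam = rho t lam ** F lam ** omega0 lam))"
proof -
  have rho_circle: "C (t z) lam = rho t lam ** C z lam"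
    if "t \<in> G" "z \<in> D" "lam \<in> unit_circle" for t z lam
    using rho that unit_circle_nonzero by blast
  show ?thesis
  proof (intro conjI ballI allI impI)
    fix t assume "t \<in> G"
    then show "t ` Iwasawa_e D C = Iwasawa_e D C" "t ` Iwasawa_omega D C = Iwasawa_omega D C"
      unfolding Iwasawa_e_eq_cell Iwasawa_omega_eq_cell
      by (simp_all add: Iwasawa_cell_deck_invariant[OF G(1) rho_SU rho_circle])
  next
    fix t z F V F' V' lam
    assume t: "t \<in> G" and z: "z \<in> Iwasawa_e D C" and lam: "lam \<in> unit_circle"
      and d: "norm_decomp_e (C z) F V" and d': "norm_decomp_e (C (t z)) F' V'"
    have monodromy: "C (t z) l = rho t l ** C z l" if "l \<in> unit_circle" for l
      using z that by (intro rho_circle[OF t]) (simp_all add: Iwasawa_e_def)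
    show "F' lam = rho t lam ** F lam"
      by (rule Iwasawa_factor_equivariant[OF rho_SU[OF t], where M = "\<lambda>_. mat 1" and Cz = "C z"])
         (use d d' monodromy lam in \<open>simp_all add: norm_decomp_e_def adjugate2_mat_1\<close>)
  next
    fix t z F V F' V' lam
    assume t: "t \<in> G" and z: "z \<in> Iwasawa_omega D C" and lam: "lam \<in> unit_circle"
      and d: "norm_decomp_omega (C z) F V" and d': "norm_decomp_omega (C (t z)) F' V'"
    have monodromy: "C (t z) l = rho t l ** C z l" if "l \<in> unit_circle" for l
      using z that by (intro rho_circle[OF t]) (simp_all add: Iwasawa_omega_def)
    have "F' lam = rho t lam ** F lam"
      by (rule Iwasawa_factor_equivariant[OF rho_SU[OF t] _ _ _ _ det_omega0[OF unit_circle_nonzero]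
            omega0_conj_su11_shape _ _ lam, where Cz = "C z"])
         (use d d' monodromy in \<open>simp_all add: norm_decomp_omega_def\<close>)
    then show "F' lam ** omega0 lam = rho t lam ** F lam ** omega0 lam" by simp
  qed
qed

end
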